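(* For a positive integer $M$, let $\mathcal O(M)$ be the set of distinct orbits $o(\mathbf{x})$ with $\mathbf{x}\in[0,M]^2\cap\mathbb{Z}^2$. Then: - $\frac1{\#\mathcal O(M)}\sum_{o\in\mathcal O(M)}\operatorname{diam}_E(o)=\frac{7\sqrt2}{6}M+O(1)$; - the average over $\mathcal O(M)$ of the side length of the smallest axis-parallel square containing the orbit is $\frac76M+O(1)$; - the average over $\mathcal O(M)$ of $\operatorname{length}(o)$ is $\frac{14}{3}M+O(1)$.
   Context: Define $\mathcal K_1(x_1,x_2)=(-x_1+x_2,x_2)$ and $\mathcal K_2(x_1,x_2)=(x_1,x_1-x_2)$ on $\mathbb{Z}^2$. The orbit $o(\mathbf{x})$ is the set of points obtained from $\mathbf{x}$ by repeated application of $\mathcal K_1,\mathcal K_2$: $(x_1,x_2)$, $(-x_1+x_2,x_2)$, $(-x_1+x_2,-x_1)$, $(-x_2,-x_1)$, $(-x_2,x_1-x_2)$, $(x_1,x_1-x_2)$. Definitions of the averaged quantities: - $\operatorname{diam}_E(o)$ is the maximum Euclidean distance between two points of $o$. - $\operatorname{length}(o(\mathbf{x}))=2\big(|2x_1-x_2|+|x_1+x_2|+|2x_2-x_1|\big)$ is the Euclidean length of the closed path through the six points in the listed order. - The smallest axis-parallel rectangle containing $o(\mathbf{x})$ is a square of side $\max\{|x_1+x_2|,|x_1-2x_2|,|x_2-2x_1|\}$. *)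

theory Defs
  imports Complex_Main
begin

type_synonym pt = "int \<times> int"

definition K1 :: "pt \<Rightarrow> pt" where
  "K1 p = (- fst p + snd p, snd p)"

definition K2 :: "pt \<Rightarrow> pt" where
  "K2 p = (fst p, fst p - snd p)"

definition Kstep :: "(pt \<times> pt) set" where
  "Kstep = {(p, K1 p) | p. True} \<union> {(p, K2 p) | p. True}"

definition orbit :: "pt \<Rightarrow> pt set" where
  "orbit x = {y. (x, y) \<in> Kstep\<^sup>*}"

definition orbits :: "nat \<Rightarrow> pt set set" where
  "orbits M = orbit ` ({0..int M} \<times> {0..int M})"

definition eucl_dist :: "pt \<Rightarrow> pt \<Rightarrow> real" where
  "eucl_dist p q = sqrt ((real_of_int (fst p - fst q))\<^sup>2 + (real_of_int (snd p - snd q))\<^sup>2)"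

definition diamE :: "pt set \<Rightarrow> real" where
  "diamE o' = Max {eucl_dist p q | p q. p \<in> o' \<and> q \<in> o'}"

definition square_side :: "pt set \<Rightarrow> real" where
  "square_side o' = real_of_int (max (Max (fst ` o') - Min (fst ` o')) (Max (snd ` o') - Min (snd ` o')))"

text \<open>Length of the closed path through the six orbit points, via a representative.\<close>
definition orbit_length :: "pt set \<Rightarrow> real" where
  "orbit_length o' = (THE l. \<exists>x1 x2. o' = orbit (x1, x2) \<and>
      l = real_of_int (2 * (\<bar>2*x1 - x2\<bar> + \<bar>x1 + x2\<bar> + \<bar>2*x2 - x1\<bar>)))"

definition avg_orbits :: "(pt set \<Rightarrow> real) \<Rightarrow> nat \<Rightarrow> real" where
  "avg_orbits f M = (\<Sum>o'\<in>orbits M. f o') / real (card (orbits M))"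

end

theory Submission
  imports Defs
begin

(* The orbit of (a, b) is the hexagon of the six listed points. Its x-coordinates are a, b - a, -b
   and its y-coordinates b, -a, a - b, so all three quantities are multiples of the width
   w(a, b) = max(|a + b|, |a - 2b|, |b - 2a|): the bounding square has side w, the diameter is
   sqrt 2 * w (attained by a pair of opposite vertices on a diagonal) and the length is 4 w.
   Every orbit of a point of [0, M]^2 has exactly one point in the fundamental domain
   {0 <= 2a <= b <= M} u {0 < b, 2b <= a <= M}, where w(a, b) = 2 max(a, b) - min(a, b).
   The points of the domain with max(a, b) = N number about N and have total width
   7N^2/4 + O(N); summing over N <= M gives M^2/2 + O(M) orbits of total width
   7M^3/12 + O(M^2), hence mean width 7M/6 + O(1). *)

definition hexagon :: "pt \<Rightarrow> pt set" where
  "hexagon p = (case p of (a, b) \<Rightarrow> {(a, b), (b - a, b), (b - a, - a), (- b, - a), (- b, a - b), (a, a - b)})"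

lemma K1_K2_mem_hexagon:
  assumes "q \<in> hexagon p"
  shows "K1 q \<in> hexagon p" and "K2 q \<in> hexagon p"
  using assms by (auto simp: hexagon_def K1_def K2_def split: prod.splits)

lemma K1_K2_mem_orbit:
  assumes "q \<in> orbit p"
  shows "K1 q \<in> orbit p" and "K2 q \<in> orbit p"
proof -
  have "(q, K1 q) \<in> Kstep" and "(q, K2 q) \<in> Kstep"
    unfolding Kstep_def by blast+
  with assms show "K1 q \<in> orbit p" and "K2 q \<in> orbit p"
    by (auto simp: orbit_def intro: rtrancl_into_rtrancl)
qed

lemma orbit_eq_hexagon: "orbit p = hexagon p"
proof
  show "orbit p \<subseteq> hexagon p"
  proof
    fix q assume "q \<in> orbit p"
    then have "(p, q) \<in> Kstep\<^sup>*"
      by (simp add: orbit_def)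
    then show "q \<in> hexagon p"
    proof (induction rule: rtrancl_induct)
      case base
      show ?case
        by (simp add: hexagon_def split: prod.splits)
    next
      case (step q r)
      then show ?case
        by (auto simp: Kstep_def K1_K2_mem_hexagon)
    qed
  qed
next
  obtain a b where p: "p = (a, b)" by (cases p)
  have 0: "(a, b) \<in> orbit p"
    by (simp add: orbit_def p)
  have 1: "(b - a, b) \<in> orbit p"
    using K1_K2_mem_orbit(1)[OF 0] by (simp add: K1_def)
  have 2: "(b - a, - a) \<in> orbit p"
    using K1_K2_mem_orbit(2)[OF 1] by (simp add: K2_def)
  have 3: "(- b, - a) \<in> orbit p"
    using K1_K2_mem_orbit(1)[OF 2] by (simp add: K1_def)
  have 4: "(- b, a - b) \<in> orbit p"
    using K1_K2_mem_orbit(2)[OF 3] by (simp add: K2_def)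
  have 5: "(a, a - b) \<in> orbit p"
    using K1_K2_mem_orbit(1)[OF 4] by (simp add: K1_def)
  show "hexagon p \<subseteq> orbit p"
    using 0 1 2 3 4 5 by (simp add: hexagon_def p)
qed

lemma mem_hexagon_self: "p \<in> hexagon p"
  by (simp add: hexagon_def split: prod.splits)

lemma hexagon_eq_if_mem:
  assumes "q \<in> hexagon p"
  shows "hexagon q = hexagon p"
proof -
  obtain a b where p: "p = (a, b)" by (cases p)
  from assms have "q = (a, b) \<or> q = (b - a, b) \<or> q = (b - a, - a) \<or> q = (- b, - a) \<or> q = (- b, a - b) \<or> q = (a, a - b)"
    by (simp add: hexagon_def p)
  then show ?thesis
    by (elim disjE) (simp_all add: hexagon_def p insert_commute)
qed

definition width :: "pt \<Rightarrow> int" where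
  "width p = (case p of (a, b) \<Rightarrow> max \<bar>a + b\<bar> (max \<bar>a - 2 * b\<bar> \<bar>b - 2 * a\<bar>))"

lemma fst_snd_image_hexagon:
  "fst ` hexagon (a, b) = {a, b - a, - b}" "snd ` hexagon (a, b) = {b, - a, a - b}"
  by (auto simp: hexagon_def image_iff)

lemma hexagon_coordinate_spread:
  assumes "q \<in> hexagon p" and "r \<in> hexagon p"
  shows "\<bar>fst q - fst r\<bar> \<le> width p" and "\<bar>snd q - snd r\<bar> \<le> width p"
proof -
  obtain a b where p: "p = (a, b)" by (cases p)
  have "fst q \<in> {a, b - a, - b}" "fst r \<in> {a, b - a, - b}"
    using assms by (simp_all add: p flip: fst_snd_image_hexagon)
  then show "\<bar>fst q - fst r\<bar> \<le> width p"
    by (auto simp: width_def p)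
  have "snd q \<in> {b, - a, a - b}" "snd r \<in> {b, - a, a - b}"
    using assms by (simp_all add: p flip: fst_snd_image_hexagon)
  then show "\<bar>snd q - snd r\<bar> \<le> width p"
    by (auto simp: width_def p)
qed

lemma square_side_hexagon: "square_side (hexagon p) = of_int (width p)"
proof -
  obtain a b where p: "p = (a, b)" by (cases p)
  have "max (Max {a, b - a, - b} - Min {a, b - a, - b}) (Max {b, - a, a - b} - Min {b, - a, a - b}) = width p"
    by (simp add: width_def p max_def min_def abs_if)
  then show ?thesis
    by (simp add: square_side_def p fst_snd_image_hexagon)
qed

lemma orbit_length_hexagon: "orbit_length (hexagon p) = 4 * of_int (width p)"
proof -
  have length_eq: "real_of_int (2 * (\<bar>2 * a - b\<bar> + \<bar>a + b\<bar> + \<bar>2 * b - a\<bar>)) = 4 * of_int (width (a, b))"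
    for a b
    by (simp add: width_def max_def abs_if)
  have width_eq: "width (a, b) = width p" if "hexagon p = hexagon (a, b)" for a b
    using that square_side_hexagon by (metis of_int_eq_iff)
  show ?thesis
    unfolding orbit_length_def orbit_eq_hexagon length_eq
  proof (rule the_equality)
    show "\<exists>a b. hexagon p = hexagon (a, b) \<and> 4 * of_int (width p) = 4 * of_int (width (a, b))"
      by (cases p) auto
  qed (use width_eq in auto)
qed

lemma eucl_dist_le:
  assumes "\<bar>fst p - fst q\<bar> \<le> w" and "\<bar>snd p - snd q\<bar> \<le> w"
  shows "eucl_dist p q \<le> sqrt 2 * of_int w"
proof -
  have w: "0 \<le> w"
    using assms(1) by linarith
  have "(fst p - fst q)\<^sup>2 \<le> w\<^sup>2" "(snd p - snd q)\<^sup>2 \<le> w\<^sup>2"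
    using assms w by (simp_all add: power2_le_iff_abs_le)
  then have "(of_int (fst p - fst q))\<^sup>2 \<le> (of_int w :: real)\<^sup>2" "(of_int (snd p - snd q))\<^sup>2 \<le> (of_int w :: real)\<^sup>2"
    by (simp_all only: of_int_power [symmetric] of_int_le_iff)
  then have "eucl_dist p q \<le> sqrt (2 * (of_int w)\<^sup>2)"
    unfolding eucl_dist_def by (intro real_sqrt_le_mono) linarith
  also have "\<dots> = sqrt 2 * of_int w"
    using w by (simp add: real_sqrt_mult)
  finally show ?thesis .
qed

lemma eucl_dist_diagonal:
  "fst p - fst q = d \<Longrightarrow> snd p - snd q = d \<Longrightarrow> eucl_dist p q = sqrt 2 * of_int \<bar>d\<bar>"
  by (simp add: eucl_dist_def real_sqrt_mult flip: mult_2)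

lemma diamE_hexagon: "diamE (hexagon p) = sqrt 2 * of_int (width p)"
proof -
  obtain a b where p: "p = (a, b)" by (cases p)
  let ?D = "{eucl_dist q r | q r. q \<in> hexagon p \<and> r \<in> hexagon p}"
  have "?D = (\<lambda>(q, r). eucl_dist q r) ` (hexagon p \<times> hexagon p)"
    by auto
  then have "finite ?D"
    by (simp add: hexagon_def p)
  moreover have "d \<le> sqrt 2 * of_int (width p)" if "d \<in> ?D" for d
    using that hexagon_coordinate_spread eucl_dist_le by blast
  moreover have "sqrt 2 * of_int (width p) \<in> ?D"
  proof -
    have diagonal_in_D: "sqrt 2 * of_int \<bar>d\<bar> \<in> ?D"
      if "q \<in> hexagon p" "r \<in> hexagon p" "fst q - fst r = d" "snd q - snd r = d" for q r d
    proof -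
      have "sqrt 2 * of_int \<bar>d\<bar> = eucl_dist q r"
        using that(3,4) by (simp add: eucl_dist_diagonal)
      with that(1,2) show ?thesis
        by blast
    qed
    have "sqrt 2 * of_int \<bar>a + b\<bar> \<in> ?D"
      by (rule diagonal_in_D[of "(a, b)" "(- b, - a)"]) (simp_all add: hexagon_def p)
    moreover have "sqrt 2 * of_int \<bar>2 * b - a\<bar> \<in> ?D"
      by (rule diagonal_in_D[of "(b - a, b)" "(- b, a - b)"]) (simp_all add: hexagon_def p)
    moreover have "sqrt 2 * of_int \<bar>2 * a - b\<bar> \<in> ?D"
      by (rule diagonal_in_D[of "(a, a - b)" "(b - a, - a)"]) (simp_all add: hexagon_def p)
    moreover have "width p = \<bar>a + b\<bar> \<or> width p = \<bar>2 * b - a\<bar> \<or> width p = \<bar>2 * a - b\<bar>"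
      by (simp add: width_def p max_def abs_minus_commute)
    ultimately show ?thesis
      by (elim disjE) (simp_all only:)
  qed
  ultimately show ?thesis
    unfolding diamE_def by (rule Max_eqI)
qed

definition fundamental_domain :: "nat \<Rightarrow> pt set" where
  "fundamental_domain M =
     {(a, b). 0 \<le> 2 * a \<and> 2 * a \<le> b \<and> b \<le> int M} \<union> {(a, b). 0 < b \<and> 2 * b \<le> a \<and> a \<le> int M}"

lemma hexagon_meets_fundamental_domain:
  assumes "p \<in> {0..int M} \<times> {0..int M}"
  shows "\<exists>q \<in> fundamental_domain M. q \<in> hexagon p"
proof -
  obtain a b where p: "p = (a, b)" by (cases p)
  have "0 \<le> a" "a \<le> int M" "0 \<le> b" "b \<le> int M"
    using assms by (auto simp: p)
  then have "(a, b) \<in> fundamental_domain M \<or> (b - a, b) \<in> fundamental_domain M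
      \<or> (- b, a - b) \<in> fundamental_domain M \<or> (a, a - b) \<in> fundamental_domain M"
    unfolding fundamental_domain_def by auto
  then show ?thesis
    by (auto simp: hexagon_def p)
qed

lemma eq_if_mem_hexagon_fundamental_domain:
  assumes "p \<in> fundamental_domain M" and "q \<in> fundamental_domain M" and "q \<in> hexagon p"
  shows "q = p"
proof -
  obtain a b where p: "p = (a, b)" by (cases p)
  from assms(3) have "q = (a, b) \<or> q = (b - a, b) \<or> q = (b - a, - a) \<or> q = (- b, - a) \<or> q = (- b, a - b) \<or> q = (a, a - b)"
    by (simp add: hexagon_def p)
  then show ?thesis
    using assms(1,2) by (elim disjE) (auto simp: fundamental_domain_def p)
qed

lemma fundamental_domain_subset: "fundamental_domain M \<subseteq> {0..int M} \<times> {0..int M}"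
  by (auto simp: fundamental_domain_def)

lemma orbits_eq_hexagon_image: "orbits M = hexagon ` fundamental_domain M"
proof
  show "orbits M \<subseteq> hexagon ` fundamental_domain M"
  proof
    fix Q assume "Q \<in> orbits M"
    then obtain p where "p \<in> {0..int M} \<times> {0..int M}" and Q: "Q = hexagon p"
      by (auto simp: orbits_def orbit_eq_hexagon)
    then obtain q where "q \<in> fundamental_domain M" and "q \<in> hexagon p"
      using hexagon_meets_fundamental_domain by blast
    then show "Q \<in> hexagon ` fundamental_domain M"
      using Q hexagon_eq_if_mem by blast
  qed
  show "hexagon ` fundamental_domain M \<subseteq> orbits M"
    using fundamental_domain_subset by (auto simp: orbits_def orbit_eq_hexagon)
qed

lemma inj_on_hexagon_fundamental_domain: "inj_on hexagon (fundamental_domain M)"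
  by (metis eq_if_mem_hexagon_fundamental_domain inj_onI mem_hexagon_self)

definition layer :: "nat \<Rightarrow> pt set" where
  "layer N = (\<lambda>k. (int k, int N)) ` {..N div 2} \<union> (\<lambda>k. (int N, int k)) ` {1..N div 2}"

lemma mem_layer_iff:
  "(a, b) \<in> layer N \<longleftrightarrow> (0 \<le> 2 * a \<and> 2 * a \<le> b \<and> b = int N) \<or> (0 < b \<and> 2 * b \<le> a \<and> a = int N)"
proof
  assume "(a, b) \<in> layer N"
  then show "(0 \<le> 2 * a \<and> 2 * a \<le> b \<and> b = int N) \<or> (0 < b \<and> 2 * b \<le> a \<and> a = int N)"
    unfolding layer_def by auto
next
  assume "(0 \<le> 2 * a \<and> 2 * a \<le> b \<and> b = int N) \<or> (0 < b \<and> 2 * b \<le> a \<and> a = int N)"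
  then show "(a, b) \<in> layer N"
  proof
    assume "0 \<le> 2 * a \<and> 2 * a \<le> b \<and> b = int N"
    then have "nat a \<in> {..N div 2}" and "(a, b) = (int (nat a), int N)"
      by auto
    then show ?thesis
      unfolding layer_def by blast
  next
    assume "0 < b \<and> 2 * b \<le> a \<and> a = int N"
    then have "nat b \<in> {1..N div 2}" and "(a, b) = (int N, int (nat b))"
      by auto
    then show ?thesis
      unfolding layer_def by blast
  qed
qed

lemma fundamental_domain_eq_UN_layer: "fundamental_domain M = (\<Union>N\<le>M. layer N)"
proof (intro set_eqI iffI)
  fix p assume "p \<in> fundamental_domain M"
  then obtain a b where p: "p = (a, b)" and
    "(0 \<le> 2 * a \<and> 2 * a \<le> b \<and> b \<le> int M) \<or> (0 < b \<and> 2 * b \<le> a \<and> a \<le> int M)"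
    by (auto simp: fundamental_domain_def)
  then have "p \<in> layer (nat b) \<and> nat b \<le> M \<or> p \<in> layer (nat a) \<and> nat a \<le> M"
    by (auto simp: mem_layer_iff)
  then show "p \<in> (\<Union>N\<le>M. layer N)"
    by auto
next
  fix p assume "p \<in> (\<Union>N\<le>M. layer N)"
  then show "p \<in> fundamental_domain M"
    by (auto simp: fundamental_domain_def mem_layer_iff split: prod.splits)
qed

lemma layer_disjoint: "N \<noteq> N' \<Longrightarrow> layer N \<inter> layer N' = {}"
  by (auto simp: mem_layer_iff)

lemma layer_parts_disjoint: "(\<lambda>k. (int k, int N)) ` {..N div 2} \<inter> (\<lambda>k. (int N, int k)) ` {1..N div 2} = {}"
  by auto

lemma card_layer: "card (layer N) = (if even N then N + 1 else N)"
proof -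
  have "card (layer N) = card {..N div 2} + card {1..N div 2}"
    unfolding layer_def
    by (subst card_Un_disjoint) (auto simp: card_image inj_on_def layer_parts_disjoint)
  then show ?thesis
    by simp presburger
qed

lemma width_layer_points:
  assumes "2 * k \<le> N"
  shows "width (int k, int N) = 2 * int N - int k" and "width (int N, int k) = 2 * int N - int k"
  using assms by (simp_all add: width_def)

lemma sum_width_layer: "4 * (\<Sum>p\<in>layer N. width p) = 7 * (int N)\<^sup>2 + (if even N then 6 * int N else 1)"
proof -
  define h where "h = N div 2"
  have top_sum: "2 * (\<Sum>k\<le>j. 2 * int N - int k) = (int j + 1) * (4 * int N - int j)" for j
    by (induction j) (simp_all add: algebra_simps)
  have right_sum: "2 * (\<Sum>k\<in>{1..j}. 2 * int N - int k) = int j * (4 * int N - int j - 1)" for j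
    by (induction j) (simp_all add: algebra_simps)
  have "(\<Sum>p\<in>layer N. width p) = (\<Sum>k\<le>h. width (int k, int N)) + (\<Sum>k\<in>{1..h}. width (int N, int k))"
    unfolding layer_def h_def
    by (subst sum.union_disjoint) (auto simp: sum.reindex inj_on_def layer_parts_disjoint)
  also have "\<dots> = (\<Sum>k\<le>h. 2 * int N - int k) + (\<Sum>k\<in>{1..h}. 2 * int N - int k)"
    by (intro arg_cong2[where f = "(+)"] sum.cong) (auto simp: h_def width_layer_points)
  finally have "2 * (\<Sum>p\<in>layer N. width p) = (int h + 1) * (4 * int N - int h) + int h * (4 * int N - int h - 1)"
    using top_sum[of h] right_sum[of h] by linarith
  moreover have "N = 2 * h \<or> N = 2 * h + 1"
    by (auto simp: h_def)
  ultimately show ?thesis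
    by (auto simp: algebra_simps power2_eq_square)
qed

lemma sum_width_layer_bounds:
  "7 * (int N)\<^sup>2 \<le> 4 * (\<Sum>p\<in>layer N. width p) \<and> 4 * (\<Sum>p\<in>layer N. width p) \<le> 7 * (int N)\<^sup>2 + 8 * int N"
proof -
  have "even N \<or> 1 \<le> int N"
    using odd_pos by fastforce
  then show ?thesis
    using sum_width_layer[of N] by auto
qed

lemma sum_atMost_real: "(\<Sum>N\<le>K. real N) = real K * (real K + 1) / 2"
  by (induction K) (simp_all add: field_simps)

lemma sum_atMost_real_squared: "(\<Sum>N\<le>K. (real N)\<^sup>2) = real K * (real K + 1) * (2 * real K + 1) / 6"
  by (induction K) (simp_all add: field_simps power2_eq_square)

lemma ratio_of_partial_sums_asymptotic:
  fixes s c :: "nat \<Rightarrow> real"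
  assumes s_lower: "\<And>N. \<alpha> * (real N)\<^sup>2 \<le> s N" and s_upper: "\<And>N. s N \<le> \<alpha> * (real N)\<^sup>2 + \<beta> * real N"
    and c_lower: "\<And>N. real N \<le> c N" and c_upper: "\<And>N. c N \<le> real N + 1"
    and "0 \<le> \<alpha>" and "0 \<le> \<beta>" and "1 \<le> M"
  shows "\<bar>(\<Sum>N\<le>M. s N) / (\<Sum>N\<le>M. c N) - 2 * \<alpha> / 3 * real M\<bar> \<le> \<alpha> + \<beta>"
proof -
  define m T S n where "m = real M" and "T = m * (m + 1) / 2"
    and "S = (\<Sum>N\<le>M. s N)" and "n = (\<Sum>N\<le>M. c N)"
  have "(\<Sum>N\<le>M. \<alpha> * (real N)\<^sup>2) \<le> S" "S \<le> (\<Sum>N\<le>M. \<alpha> * (real N)\<^sup>2 + \<beta> * real N)"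
    unfolding S_def using s_lower s_upper by (auto intro: sum_mono)
  then have S_lower: "2 * \<alpha> / 3 * m * T + \<alpha> / 3 * T \<le> S" and S_upper: "S \<le> 2 * \<alpha> / 3 * m * T + (\<alpha> / 3 + \<beta>) * T"
    by (simp_all add: sum.distrib flip: sum_distrib_left add: sum_atMost_real sum_atMost_real_squared m_def T_def field_simps)
  have "(\<Sum>N\<le>M. real N) \<le> n" "n \<le> (\<Sum>N\<le>M. real N + 1)"
    unfolding n_def using c_lower c_upper by (auto intro: sum_mono)
  then have n_lower: "T \<le> n" and n_upper: "n \<le> T + m + 1"
    by (simp_all add: sum.distrib sum_atMost_real m_def T_def)
  have "1 \<le> m"
    using \<open>1 \<le> M\<close> by (simp add: m_def)
  then have "1 \<le> T"
    using mult_mono[of 1 m 1 m] by (simp add: T_def distrib_left)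
  then have n_pos: "0 < n"
    using n_lower by linarith
  have "0 \<le> 2 * \<alpha> / 3 * m"
    using \<open>0 \<le> \<alpha>\<close> by (simp add: m_def)
  then have "2 * \<alpha> / 3 * m * T \<le> 2 * \<alpha> / 3 * m * n" "2 * \<alpha> / 3 * m * n \<le> 2 * \<alpha> / 3 * m * (T + m + 1)"
    by (simp_all only: mult_left_mono n_lower n_upper)
  moreover have "2 * \<alpha> / 3 * m * (T + m + 1) = 2 * \<alpha> / 3 * m * T + 4 * \<alpha> / 3 * T"
    by (simp add: T_def field_simps)
  moreover have "(\<alpha> + \<beta>) * T \<le> (\<alpha> + \<beta>) * n"
    using n_lower \<open>0 \<le> \<alpha>\<close> \<open>0 \<le> \<beta>\<close> by (simp add: mult_left_mono)
  ultimately have "\<bar>S - 2 * \<alpha> / 3 * m * n\<bar> \<le> (\<alpha> + \<beta>) * n"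
    using S_lower S_upper \<open>0 \<le> \<alpha>\<close> \<open>0 \<le> \<beta>\<close> \<open>1 \<le> T\<close>
    by (simp add: abs_le_iff algebra_simps)
  moreover have "S / n - 2 * \<alpha> / 3 * m = (S - 2 * \<alpha> / 3 * m * n) / n"
    using n_pos by (simp add: field_simps)
  ultimately show ?thesis
    using n_pos by (simp add: S_def n_def m_def abs_divide pos_divide_le_eq)
qed

lemma avg_orbits_square_side_eq:
  "avg_orbits square_side M =
     (\<Sum>N\<le>M. real_of_int (\<Sum>p\<in>layer N. width p)) / (\<Sum>N\<le>M. real (card (layer N)))"
proof -
  have fin: "finite (layer N)" for N
    by (simp add: layer_def)
  have disj: "\<forall>N\<in>{..M}. \<forall>N'\<in>{..M}. N \<noteq> N' \<longrightarrow> layer N \<inter> layer N' = {}"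
    using layer_disjoint by blast
  have "avg_orbits square_side M =
      (\<Sum>p\<in>fundamental_domain M. real_of_int (width p)) / real (card (fundamental_domain M))"
    unfolding avg_orbits_def orbits_eq_hexagon_image
    by (simp add: sum.reindex card_image inj_on_hexagon_fundamental_domain square_side_hexagon)
  also have "\<dots> = (\<Sum>N\<le>M. real_of_int (\<Sum>p\<in>layer N. width p)) / (\<Sum>N\<le>M. real (card (layer N)))"
    unfolding fundamental_domain_eq_UN_layer
    by (simp add: sum.UNION_disjoint[OF _ _ disj] card_UN_disjoint[OF _ _ disj] fin)
  finally show ?thesis .
qed

lemma avg_orbits_square_side_asymptotic:
  assumes "1 \<le> M"
  shows "\<bar>avg_orbits square_side M - 7 / 6 * real M\<bar> \<le> 15 / 4"
proof -
  have "7 / 4 * (real N)\<^sup>2 \<le> real_of_int (\<Sum>p\<in>layer N. width p)"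
    "real_of_int (\<Sum>p\<in>layer N. width p) \<le> 7 / 4 * (real N)\<^sup>2 + 2 * real N" for N
    using sum_width_layer_bounds[of N] by (fastforce dest: of_int_le_iff[where 'a = real, THEN iffD2])+
  moreover have "real N \<le> real (card (layer N))" "real (card (layer N)) \<le> real N + 1" for N
    by (simp_all add: card_layer)
  ultimately show ?thesis
    unfolding avg_orbits_square_side_eq
    using ratio_of_partial_sums_asymptotic[where \<alpha> = "7 / 4" and \<beta> = 2] assms by fastforce
qed

lemma avg_orbits_cmult:
  assumes "\<And>Q. Q \<in> orbits M \<Longrightarrow> f Q = c * g Q"
  shows "avg_orbits f M = c * avg_orbits g M"
  using assms by (simp add: avg_orbits_def sum_distrib_left)

lemma avg_orbits_asymptotic_if_proportional_to_side:
  assumes "\<And>p. f (hexagon p) = c * square_side (hexagon p)" and "1 \<le> M"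
  shows "\<bar>avg_orbits f M - c * (7 / 6 * real M)\<bar> \<le> \<bar>c\<bar> * (15 / 4)"
proof -
  have "avg_orbits f M = c * avg_orbits square_side M"
    using assms(1) by (intro avg_orbits_cmult) (auto simp: orbits_eq_hexagon_image)
  then have "avg_orbits f M - c * (7 / 6 * real M) = c * (avg_orbits square_side M - 7 / 6 * real M)"
    by (simp add: right_diff_distrib)
  then have "\<bar>avg_orbits f M - c * (7 / 6 * real M)\<bar> = \<bar>c\<bar> * \<bar>avg_orbits square_side M - 7 / 6 * real M\<bar>"
    by (simp add: abs_mult)
  also have "\<dots> \<le> \<bar>c\<bar> * (15 / 4)"
    using avg_orbits_square_side_asymptotic[OF assms(2)] by (intro mult_left_mono) simp_all
  finally show ?thesis .
qed

theorem mainTheorem17: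
  shows "(\<exists>C. \<forall>M::nat. M \<ge> 1 \<longrightarrow>
            \<bar>avg_orbits diamE M - 7 * sqrt 2 / 6 * real M\<bar> \<le> C)
       \<and> (\<exists>C. \<forall>M::nat. M \<ge> 1 \<longrightarrow>
            \<bar>avg_orbits square_side M - 7 / 6 * real M\<bar> \<le> C)
       \<and> (\<exists>C. \<forall>M::nat. M \<ge> 1 \<longrightarrow>
            \<bar>avg_orbits orbit_length M - 14 / 3 * real M\<bar> \<le> C)"
proof (intro conjI exI allI impI)
  fix M :: nat assume M: "M \<ge> 1"
  have "diamE (hexagon p) = sqrt 2 * square_side (hexagon p)" for p
    by (simp add: diamE_hexagon square_side_hexagon)
  from avg_orbits_asymptotic_if_proportional_to_side[OF this M]
  show "\<bar>avg_orbits diamE M - 7 * sqrt 2 / 6 * real M\<bar> \<le> sqrt 2 * (15 / 4)"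
    by (simp add: field_simps)
  show "\<bar>avg_orbits square_side M - 7 / 6 * real M\<bar> \<le> 15 / 4"
    using avg_orbits_square_side_asymptotic[OF M] .
  have "orbit_length (hexagon p) = 4 * square_side (hexagon p)" for p
    by (simp add: orbit_length_hexagon square_side_hexagon)
  from avg_orbits_asymptotic_if_proportional_to_side[OF this M]
  show "\<bar>avg_orbits orbit_length M - 14 / 3 * real M\<bar> \<le> 4 * (15 / 4)"
    by (simp add: field_simps)
qed

end
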